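(* Let $n\ge 3$ and let $\mathcal{P}_E(D_{2n})$ be the enhanced power graph of the dihedral group $D_{2n}$. Then the Sombor spectrum of $\mathcal{P}_E(D_{2n})$ consists of $-(n-1)\sqrt2$ with multiplicity $n-2$, $0$ with multiplicity $n-1$, and the three roots (with multiplicity) of \[x^2\big(x-(n-1)(n-2)\sqrt2\big)-(n-1)(5n^2-6n+2)x-2n(2n^2-2n+1)\big(x-(n-1)(n-2)\sqrt2\big).\]
   Context: For a finite simple graph $\Gamma$ with vertices $u_1,\dots,u_N$, the Sombor matrix $S(\Gamma)$ has $(i,j)$ entry $\sqrt{\deg(u_i)^2+\deg(u_j)^2}$ if $u_i,u_j$ are adjacent and $0$ otherwise; the Sombor spectrum is the multiset of its eigenvalues. $D_{2n}=\langle a,b: a^n=b^2=e,\ ba=a^{-1}b\rangle$. The enhanced power graph $\mathcal{P}_E(G)$ of a group $G$ has vertex set $G$, two distinct vertices being adjacent iff both belong to a common cyclic subgroup of $G$. *)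

theory Defs
  imports "Jordan_Normal_Form.Char_Poly" "HOL-Algebra.Generated_Groups"
begin

text \<open>Dihedral group of order 2n: element (i, s) stands for a^i b^s (s = True means b present),
  with a^n = b^2 = e and b a = a^{-1} b.\<close>
definition dihedral_group :: "nat \<Rightarrow> (nat \<times> bool) monoid" where
  "dihedral_group n = \<lparr> carrier = {0..<n} \<times> (UNIV :: bool set),
     mult = (\<lambda>(i, s) (j, t). ((if s then i + (n - j) else i + j) mod n, s \<noteq> t)),
     one = (0, False) \<rparr>"

definition enhanced_power_adj :: "('a, 'b) monoid_scheme \<Rightarrow> 'a \<Rightarrow> 'a \<Rightarrow> bool" where
  "enhanced_power_adj G x y \<longleftrightarrow> x \<in> carrier G \<and> y \<in> carrier G \<and> x \<noteq> y \<and>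
     (\<exists>z \<in> carrier G. x \<in> generate G {z} \<and> y \<in> generate G {z})"

definition graph_deg :: "'a set \<Rightarrow> ('a \<Rightarrow> 'a \<Rightarrow> bool) \<Rightarrow> 'a \<Rightarrow> nat" where
  "graph_deg V E u = card {v \<in> V. E u v}"

definition sombor_matrix :: "'a list \<Rightarrow> ('a \<Rightarrow> 'a \<Rightarrow> bool) \<Rightarrow> real mat" where
  "sombor_matrix vs E = mat (length vs) (length vs) (\<lambda>(i, j).
     if E (vs ! i) (vs ! j)
     then sqrt (real (graph_deg (set vs) E (vs ! i)) ^ 2 + real (graph_deg (set vs) E (vs ! j)) ^ 2)
     else 0)"

end

theory Submission
  imports Defs "HOL-Algebra.Multiplicative_Group"
begin

(* The cyclic subgroups of D_2n are the subgroups of the rotation group <a> and the groups {e, a^i b}.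
   Hence P_E(D_2n) is the complete graph on the n rotations with the n reflections attached as
   pendant vertices to the identity, and its Sombor matrix is a weighted adjacency matrix with one
   weight per edge class: a (identity-rotation), b (identity-reflection), w (rotation-rotation).
   The differences e_r - e_r' of two non-identity rotations are eigenvectors for -w, the differences
   of two reflections lie in the kernel, and together with e_identity and the indicator vectors of
   the non-identity rotations and of the reflections they form a basis in which the matrix becomes
   block diagonal.  The remaining 3x3 block is the quotient matrix of the partition
   {identity, rotations, reflections}; its characteristic polynomial is the cubic factor. *)

lemma det_permute_rows_cols:
  fixes A :: "'a :: comm_ring_1 mat"
  assumes A: "A \<in> carrier_mat n n" and p: "p permutes {0..<n}"
  shows "det (mat n n (\<lambda>(i, j). A $$ (p i, p j))) = det A"
proof -
  have p_lt: "i < n \<Longrightarrow> p i < n" for i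
    using permutes_in_image[OF p] by simp
  define A' where "A' = mat n n (\<lambda>(i, j). A $$ (i, p j))"
  have A': "A' \<in> carrier_mat n n"
    by (simp add: A'_def)
  have "det (mat n n (\<lambda>(i, j). A $$ (p i, p j))) = det (mat n n (\<lambda>(i, j). A' $$ (p i, j)))"
    by (rule arg_cong[where f = det]) (auto simp: A'_def p_lt)
  also have "\<dots> = signof p * det (transpose_mat A')"
    using det_permute_rows[OF A' p] det_transpose[OF A'] by simp
  also have "transpose_mat A' = mat n n (\<lambda>(i, j). transpose_mat A $$ (p i, j))"
    using A by (auto simp: A'_def p_lt)
  also have "det \<dots> = signof p * det A"
    using det_permute_rows[OF _ p, of "transpose_mat A"] det_transpose[OF A] A by simp
  finally show ?thesis
    by (metis mult.assoc mult_1 of_int_1 of_int_mult sign_idempotent)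
qed

lemma char_poly_permute:
  fixes A :: "'a :: comm_ring_1 mat"
  assumes A: "A \<in> carrier_mat n n" and p: "p permutes {0..<n}"
  shows "char_poly (mat n n (\<lambda>(i, j). A $$ (p i, p j))) = char_poly A"
proof -
  have p_lt: "i < n \<Longrightarrow> p i < n" and p_eq: "i < n \<Longrightarrow> j < n \<Longrightarrow> p i = p j \<longleftrightarrow> i = j" for i j
    using permutes_in_image[OF p] permutes_inj_on[OF p] by (auto simp: inj_on_eq_iff)
  have "char_poly_matrix (mat n n (\<lambda>(i, j). A $$ (p i, p j))) =
      mat n n (\<lambda>(i, j). char_poly_matrix A $$ (p i, p j))"
    by (rule eq_matI) (use A in \<open>auto simp: char_poly_matrix_def p_lt p_eq\<close>)
  then show ?thesis
    unfolding char_poly_def using det_permute_rows_cols[OF char_poly_matrix_closed[OF A] p] by simp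
qed

lemma char_poly_enumeration_invariant:
  assumes "distinct vs" and "distinct ws" and "set vs = set ws"
  shows "char_poly (mat (length vs) (length vs) (\<lambda>(i, j). f (vs ! i) (vs ! j))) =
    char_poly (mat (length ws) (length ws) (\<lambda>(i, j). f (ws ! i) (ws ! j)))"
proof -
  have mset: "mset vs = mset ws"
    using assms by (simp add: set_eq_iff_mset_eq_distinct)
  then obtain p where p: "p permutes {..<length ws}" and vs: "permute_list p ws = vs"
    by (rule mset_eq_permutation)
  have len: "length vs = length ws"
    using mset by (rule mset_eq_length)
  have p_lt: "i < length ws \<Longrightarrow> p i < length ws" and vs_nth: "i < length ws \<Longrightarrow> vs ! i = ws ! p i" for i
    using permutes_in_image[OF p] permute_list_nth[OF p] vs by auto
  let ?W = "mat (length ws) (length ws) (\<lambda>(i, j). f (ws ! i) (ws ! j))"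
  have "mat (length vs) (length vs) (\<lambda>(i, j). f (vs ! i) (vs ! j)) =
      mat (length ws) (length ws) (\<lambda>(i, j). ?W $$ (p i, p j))"
    by (rule eq_matI) (auto simp: len p_lt vs_nth)
  also have "char_poly \<dots> = char_poly ?W"
    by (rule char_poly_permute) (use p in \<open>auto simp: lessThan_atLeast0\<close>)
  finally show ?thesis .
qed

lemma char_poly_sombor_matrix_enumeration_invariant:
  assumes "distinct vs" and "distinct ws" and "set vs = set ws"
  shows "char_poly (sombor_matrix vs E) = char_poly (sombor_matrix ws E)"
  unfolding sombor_matrix_def \<open>set vs = set ws\<close>
  using char_poly_enumeration_invariant[OF assms, where f = "\<lambda>u v. if E u v
    then sqrt (real (graph_deg (set ws) E u) ^ 2 + real (graph_deg (set ws) E v) ^ 2) else 0"]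
  by simp

lemma similar_mat_intertwining:
  fixes A B P Q :: "'a :: field mat"
  assumes "A \<in> carrier_mat n n" "B \<in> carrier_mat n n" "P \<in> carrier_mat n n" "Q \<in> carrier_mat n n"
    and QP: "Q * P = 1\<^sub>m n" and AP: "A * P = P * B"
  shows "similar_mat A B"
proof (rule similar_matI)
  show PQ: "P * Q = 1\<^sub>m n"
    using assms(4,3) QP by (rule mat_mult_left_right_inverse)
  have "A = A * (P * Q)"
    using assms(1) by (simp add: PQ)
  also have "\<dots> = A * P * Q"
    using assms(1,3,4) by (simp add: assoc_mult_mat)
  also have "\<dots> = P * B * Q"
    by (simp add: AP)
  finally show "A = P * B * Q" .
qed (use assms in auto)

lemma index_mult_mat_sum:
  assumes "A \<in> carrier_mat n m" "B \<in> carrier_mat m r" "i < n" "j < r"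
  shows "(A * B) $$ (i, j) = (\<Sum>k < m. A $$ (i, k) * B $$ (k, j))"
  using assms by (auto simp: scalar_prod_def lessThan_atLeast0 intro!: sum.cong)

lemma det_dim_2:
  fixes A :: "'a :: comm_ring_1 mat"
  assumes A: "A \<in> carrier_mat 2 2"
  shows "det A = A $$ (0, 0) * A $$ (1, 1) - A $$ (0, 1) * A $$ (1, 0)"
proof -
  have "det A = (\<Sum>i<2. A $$ (i, 0) * cofactor A i 0)"
    using A by (rule laplace_expansion_column) simp
  then show ?thesis
    using A by (simp add: numeral_2_eq_2 cofactor_def det_single mat_delete_def algebra_simps)
qed

lemma det_dim_3:
  fixes A :: "'a :: comm_ring_1 mat"
  assumes A: "A \<in> carrier_mat 3 3"
  shows "det A = A $$ (0, 0) * (A $$ (1, 1) * A $$ (2, 2) - A $$ (1, 2) * A $$ (2, 1))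
     - A $$ (1, 0) * (A $$ (0, 1) * A $$ (2, 2) - A $$ (0, 2) * A $$ (2, 1))
     + A $$ (2, 0) * (A $$ (0, 1) * A $$ (1, 2) - A $$ (0, 2) * A $$ (1, 1))"
proof -
  have "det A = (\<Sum>i<3. A $$ (i, 0) * cofactor A i 0)"
    using A by (rule laplace_expansion_column) simp
  then show ?thesis
    using A by (simp add: numeral_3_eq_3 numeral_2_eq_2 cofactor_def det_dim_2 mat_delete_def algebra_simps)
qed

lemma char_poly_four_block_mat_lower_left_zero:
  fixes A :: "'a :: idom mat"
  assumes A: "A \<in> carrier_mat n n" and B: "B \<in> carrier_mat n m" and D: "D \<in> carrier_mat m m"
  shows "char_poly (four_block_mat A B (0\<^sub>m m n) D) = char_poly A * char_poly D"
proof -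
  have "char_poly_matrix (four_block_mat A B (0\<^sub>m m n) D) =
      four_block_mat (char_poly_matrix A) (map_mat (\<lambda>a. [:- a:]) B) (0\<^sub>m m n) (char_poly_matrix D)"
    using A B D by (intro eq_matI) (auto simp: char_poly_matrix_def)
  then show ?thesis
    unfolding char_poly_def using A B D
    by (simp add: det_four_block_mat_lower_left_zero[OF char_poly_matrix_closed[OF A] _ refl
        char_poly_matrix_closed[OF D]])
qed

(* Index layout of clique_pendant_mat p q: vertex 0 is the hub, adjacent to all others; the p clique
   vertices are 1 and 3, ..., p + 1; the q pendant vertices are 2 and p + 2, ..., p + q.  Putting one
   vertex of each class at 1 and 2 makes the quotient block the top left 3x3 corner. *)
definition clique_index :: "nat \<Rightarrow> nat \<Rightarrow> bool" where
  "clique_index p i \<longleftrightarrow> i = 1 \<or> (3 \<le> i \<and> i < p + 2)"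

definition pendant_index :: "nat \<Rightarrow> nat \<Rightarrow> bool" where
  "pendant_index p i \<longleftrightarrow> i = 2 \<or> p + 2 \<le> i"

definition clique_pendant_mat :: "nat \<Rightarrow> nat \<Rightarrow> 'a \<Rightarrow> 'a \<Rightarrow> 'a \<Rightarrow> 'a :: zero mat" where
  "clique_pendant_mat p q a b w = mat (p + q + 1) (p + q + 1) (\<lambda>(i, j).
     if i = j then 0
     else if i = 0 then (if clique_index p j then a else b)
     else if j = 0 then (if clique_index p i then a else b)
     else if clique_index p i \<and> clique_index p j then w else 0)"

definition clique_pendant_basis :: "nat \<Rightarrow> nat \<Rightarrow> 'a :: comm_ring_1 mat" where
  "clique_pendant_basis p q = mat (p + q + 1) (p + q + 1) (\<lambda>(i, j).
     if j = 0 then of_bool (i = 0)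
     else if j = 1 then of_bool (clique_index p i)
     else if j = 2 then of_bool (pendant_index p i)
     else if j < p + 2 then of_bool (i = 1) - of_bool (i = j)
     else of_bool (i = 2) - of_bool (i = j))"

definition clique_pendant_basis_inv :: "nat \<Rightarrow> nat \<Rightarrow> 'a :: field mat" where
  "clique_pendant_basis_inv p q = mat (p + q + 1) (p + q + 1) (\<lambda>(i, j).
     if i = 0 then of_bool (j = 0)
     else if i = 1 then of_bool (clique_index p j) / of_nat p
     else if i = 2 then of_bool (pendant_index p j) / of_nat q
     else if i < p + 2 then of_bool (clique_index p j) / of_nat p - of_bool (j = i)
     else of_bool (pendant_index p j) / of_nat q - of_bool (j = i))"

definition clique_pendant_block_mat :: "nat \<Rightarrow> nat \<Rightarrow> 'a \<Rightarrow> 'a \<Rightarrow> 'a \<Rightarrow> 'a :: comm_ring_1 mat" where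
  "clique_pendant_block_mat p q a b w = mat (p + q + 1) (p + q + 1) (\<lambda>(i, j).
     if i = 0 then (if j = 1 then of_nat p * a else if j = 2 then of_nat q * b else 0)
     else if i = 1 then (if j = 0 then a else if j = 1 then of_nat (p - 1) * w else 0)
     else if i = 2 then (if j = 0 then b else 0)
     else if i = j \<and> i < p + 2 then - w else 0)"

lemma clique_pendant_mat_carrier: "clique_pendant_mat p q a b w \<in> carrier_mat (p + q + 1) (p + q + 1)"
  by (simp add: clique_pendant_mat_def)

lemma clique_pendant_basis_carrier: "clique_pendant_basis p q \<in> carrier_mat (p + q + 1) (p + q + 1)"
  by (simp add: clique_pendant_basis_def)

lemma clique_pendant_basis_inv_carrier: "clique_pendant_basis_inv p q \<in> carrier_mat (p + q + 1) (p + q + 1)"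
  by (simp add: clique_pendant_basis_inv_def)

lemma clique_pendant_block_mat_carrier: "clique_pendant_block_mat p q a b w \<in> carrier_mat (p + q + 1) (p + q + 1)"
  by (simp add: clique_pendant_block_mat_def)

lemma sum_clique_pendant_indices:
  fixes p q :: nat
  assumes "p \<ge> 1" "q \<ge> 1"
  shows "(\<Sum>k < p + q + 1. f k) =
    f 0 + f 1 + f 2 + (\<Sum>k \<in> {3..<p + 2}. f k) + (\<Sum>k \<in> {p + 2..<p + q + 1}. f k)"
proof -
  have "sum f {0..<3} + sum f {3..<p + 2} = sum f {0..<p + 2}"
    using assms by (intro sum.atLeastLessThan_concat) auto
  moreover have "sum f {0..<p + 2} + sum f {p + 2..<p + q + 1} = sum f {0..<p + q + 1}"
    using assms by (intro sum.atLeastLessThan_concat) auto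
  moreover have "sum f {0..<3} = f 0 + f 1 + f 2"
    by (simp add: numeral_3_eq_3 numeral_2_eq_2)
  ultimately show ?thesis
    by (simp add: lessThan_atLeast0)
qed

(* The entries of all matrices below, restricted to the non-representative clique or pendant indices k,
   have the form x - [k = i] u; this evaluates the corresponding parts of the matrix products. *)
lemma sum_mult_minus_indicator:
  fixes x y u v :: "'a :: comm_ring_1"
  assumes "finite A"
  shows "(\<Sum>k \<in> A. (x - of_bool (k = i) * u) * (y - of_bool (k = j) * v)) =
    of_nat (card A) * x * y - of_bool (i \<in> A) * u * y - of_bool (j \<in> A) * x * v
    + of_bool (i \<in> A \<and> i = j) * u * v"
proof -
  have "(x - of_bool (k = i) * u) * (y - of_bool (k = j) * v) =
      x * y - (if k = i then u * y else 0) - (if k = j then x * v else 0)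
      + (if k = i then of_bool (i = j) * (u * v) else 0)" for k
    by (auto simp: algebra_simps)
  then show ?thesis
    using assms by (simp add: sum.distrib sum_subtractf sum.delta)
qed

lemma sum_clique_pendant_basis_inv_basis:
  fixes p q :: nat
  assumes p: "p \<ge> 1" and q: "q \<ge> 1" and i: "i < p + q + 1" and j: "j < p + q + 1"
  shows "(\<Sum>k < p + q + 1. clique_pendant_basis_inv p q $$ (i, k) * clique_pendant_basis p q $$ (k, j)) =
    (of_bool (i = j) :: 'a :: field_char_0)"
proof -
  define Q :: "nat \<Rightarrow> nat \<Rightarrow> 'a" where "Q i j = clique_pendant_basis_inv p q $$ (i, j)" for i j
  define P :: "nat \<Rightarrow> nat \<Rightarrow> 'a" where "P i j = clique_pendant_basis p q $$ (i, j)" for i j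
  note defs = Q_def P_def clique_pendant_basis_inv_def clique_pendant_basis_def clique_index_def pendant_index_def
  let ?I = "{3..<p + 2}" and ?J = "{p + 2..<p + q + 1}"
  let ?c = "of_bool (clique_index p i) / of_nat p :: 'a" and ?d = "of_bool (pendant_index p i) / of_nat q :: 'a"
  have "(\<Sum>k \<in> ?I. Q i k * P k j) =
      (\<Sum>k \<in> ?I. (?c - of_bool (k = i) * 1) * (of_bool (j = 1) - of_bool (k = j) * 1))"
    using i j p q by (intro sum.cong) (auto simp: defs)
  also have "\<dots> = of_nat (p - 1) * ?c * of_bool (j = 1) - of_bool (i \<in> ?I) * of_bool (j = 1)
      - of_bool (j \<in> ?I) * ?c + of_bool (i \<in> ?I \<and> i = j)"
    by (subst sum_mult_minus_indicator) auto
  finally have clique: "(\<Sum>k \<in> ?I. Q i k * P k j) = \<dots>" .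
  have "(\<Sum>k \<in> ?J. Q i k * P k j) =
      (\<Sum>k \<in> ?J. (?d - of_bool (k = i) * 1) * (of_bool (j = 2) - of_bool (k = j) * 1))"
    using i j p q by (intro sum.cong) (auto simp: defs)
  also have "\<dots> = of_nat (q - 1) * ?d * of_bool (j = 2) - of_bool (i \<in> ?J) * of_bool (j = 2)
      - of_bool (j \<in> ?J) * ?d + of_bool (i \<in> ?J \<and> i = j)"
    by (subst sum_mult_minus_indicator) auto
  finally have pendant: "(\<Sum>k \<in> ?J. Q i k * P k j) = \<dots>" .
  show ?thesis
    unfolding Q_def[symmetric] P_def[symmetric] sum_clique_pendant_indices[OF p q] clique pendant
    using i j p q by (auto simp: defs of_nat_diff) (simp_all add: field_simps)
qed

lemma clique_pendant_basis_inv_mult: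
  assumes "p \<ge> 1" and "q \<ge> 1"
  shows "clique_pendant_basis_inv p q * clique_pendant_basis p q = (1\<^sub>m (p + q + 1) :: 'a :: field_char_0 mat)"
proof (rule eq_matI)
  fix i j assume "i < dim_row (1\<^sub>m (p + q + 1) :: 'a mat)" "j < dim_col (1\<^sub>m (p + q + 1) :: 'a mat)"
  then have i: "i < p + q + 1" and j: "j < p + q + 1"
    by simp_all
  show "(clique_pendant_basis_inv p q * clique_pendant_basis p q) $$ (i, j) = (1\<^sub>m (p + q + 1) :: 'a mat) $$ (i, j)"
    unfolding index_mult_mat_sum[OF clique_pendant_basis_inv_carrier clique_pendant_basis_carrier i j]
      sum_clique_pendant_basis_inv_basis[OF assms i j]
    using i j by simp
qed (simp_all add: clique_pendant_basis_inv_def clique_pendant_basis_def)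

lemma sum_clique_pendant_mat_basis:
  fixes p q :: nat and a b w :: "'a :: comm_ring_1"
  assumes p: "p \<ge> 1" and q: "q \<ge> 1" and i: "i < p + q + 1" and j: "j < p + q + 1"
  shows "(\<Sum>k < p + q + 1. clique_pendant_mat p q a b w $$ (i, k) * clique_pendant_basis p q $$ (k, j)) =
    (\<Sum>k < p + q + 1. clique_pendant_basis p q $$ (i, k) * clique_pendant_block_mat p q a b w $$ (k, j))"
proof -
  define C where "C i j = clique_pendant_mat p q a b w $$ (i, j)" for i j
  define P where "P i j = (clique_pendant_basis p q :: 'a mat) $$ (i, j)" for i j
  define B where "B i j = clique_pendant_block_mat p q a b w $$ (i, j)" for i j
  note defs = C_def P_def B_def clique_pendant_mat_def clique_pendant_basis_def
    clique_pendant_block_mat_def clique_index_def pendant_index_def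
  let ?I = "{3..<p + 2}" and ?J = "{p + 2..<p + q + 1}"
  let ?c = "of_bool (i = 0) * a + of_bool (clique_index p i) * w"
  have "(\<Sum>k \<in> ?I. C i k * P k j) =
      (\<Sum>k \<in> ?I. (?c - of_bool (k = i) * w) * (of_bool (j = 1) - of_bool (k = j) * 1))"
    using i j p q by (intro sum.cong) (auto simp: defs)
  also have "\<dots> = of_nat (p - 1) * ?c * of_bool (j = 1) - of_bool (i \<in> ?I) * w * of_bool (j = 1)
      - of_bool (j \<in> ?I) * ?c + of_bool (i \<in> ?I \<and> i = j) * w"
    by (subst sum_mult_minus_indicator) auto
  finally have CP_clique: "(\<Sum>k \<in> ?I. C i k * P k j) = \<dots>" .
  have "(\<Sum>k \<in> ?J. C i k * P k j) =
      (\<Sum>k \<in> ?J. (of_bool (i = 0) * b - of_bool (k = i) * 0) * (of_bool (j = 2) - of_bool (k = j) * 1))"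
    using i j p q by (intro sum.cong) (auto simp: defs)
  also have "\<dots> = of_nat (q - 1) * (of_bool (i = 0) * b) * of_bool (j = 2)
      - of_bool (j \<in> ?J) * (of_bool (i = 0) * b)"
    by (subst sum_mult_minus_indicator) auto
  finally have CP_pendant: "(\<Sum>k \<in> ?J. C i k * P k j) = \<dots>" .
  have "(\<Sum>k \<in> ?I. P i k * B k j) =
      (\<Sum>k \<in> ?I. (of_bool (i = 1) - of_bool (k = i) * 1) * (0 - of_bool (k = j) * w))"
    using i j p q by (intro sum.cong) (auto simp: defs)
  also have "\<dots> = - of_bool (j \<in> ?I) * of_bool (i = 1) * w + of_bool (i \<in> ?I \<and> i = j) * w"
    by (subst sum_mult_minus_indicator) auto
  finally have PB_clique: "(\<Sum>k \<in> ?I. P i k * B k j) = \<dots>" .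
  have PB_pendant: "(\<Sum>k \<in> ?J. P i k * B k j) = 0"
    using i j p q by (intro sum.neutral) (auto simp: defs)
  show ?thesis
    unfolding C_def[symmetric] P_def[symmetric] B_def[symmetric] sum_clique_pendant_indices[OF p q]
      CP_clique CP_pendant PB_clique PB_pendant
    using i j p q by (auto simp: defs of_nat_diff algebra_simps)
qed

lemma clique_pendant_mat_mult_basis:
  assumes "p \<ge> 1" and "q \<ge> 1"
  shows "clique_pendant_mat p q a b w * clique_pendant_basis p q =
    clique_pendant_basis p q * clique_pendant_block_mat p q a b (w :: 'a :: comm_ring_1)"
proof (rule eq_matI)
  fix i j assume "i < dim_row (clique_pendant_basis p q * clique_pendant_block_mat p q a b w)"
    "j < dim_col (clique_pendant_basis p q * clique_pendant_block_mat p q a b w)"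
  then have i: "i < p + q + 1" and j: "j < p + q + 1"
    by (simp_all add: clique_pendant_basis_def clique_pendant_block_mat_def)
  show "(clique_pendant_mat p q a b w * clique_pendant_basis p q) $$ (i, j) =
      (clique_pendant_basis p q * clique_pendant_block_mat p q a b w) $$ (i, j)"
    unfolding index_mult_mat_sum[OF clique_pendant_mat_carrier clique_pendant_basis_carrier i j]
      index_mult_mat_sum[OF clique_pendant_basis_carrier clique_pendant_block_mat_carrier i j]
    by (rule sum_clique_pendant_mat_basis[OF assms i j])
qed (simp_all add: clique_pendant_mat_def clique_pendant_basis_def clique_pendant_block_mat_def)

lemma char_poly_clique_pendant_block_mat:
  fixes p q :: nat and a b w :: "'a :: idom"
  assumes p: "p \<ge> 1" and q: "q \<ge> 1"
  shows "char_poly (clique_pendant_block_mat p q a b w) =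
    [:w, 1:] ^ (p - 1) * [:0, 1:] ^ (q - 1) *
    ([:0, 1:] ^ 2 * ([:0, 1:] - [:of_nat (p - 1) * w:]) - [:of_nat p * a ^ 2:] * [:0, 1:]
      - [:of_nat q * b ^ 2:] * ([:0, 1:] - [:of_nat (p - 1) * w:]))"
proof -
  define m where "m = p + q - 2"
  define T :: "'a mat" where "T = mat 3 3 (\<lambda>(i, j). clique_pendant_block_mat p q a b w $$ (i, j))"
  define D :: "'a mat" where "D = mat m m (\<lambda>(i, j). if i = j \<and> i < p - 1 then - w else 0)"
  have T: "T \<in> carrier_mat 3 3" and D: "D \<in> carrier_mat m m"
    by (simp_all add: T_def D_def)
  have "clique_pendant_block_mat p q a b w = four_block_mat T (0\<^sub>m 3 m) (0\<^sub>m m 3) D"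
    using p q by (intro eq_matI) (auto simp: clique_pendant_block_mat_def T_def D_def m_def)
  then have "char_poly (clique_pendant_block_mat p q a b w) = char_poly T * char_poly D"
    using char_poly_four_block_mat_lower_left_zero[OF T _ D] by simp
  moreover have "char_poly T = [:0, 1:] ^ 2 * ([:0, 1:] - [:of_nat (p - 1) * w:]) - [:of_nat p * a ^ 2:] * [:0, 1:]
      - [:of_nat q * b ^ 2:] * ([:0, 1:] - [:of_nat (p - 1) * w:])"
    unfolding char_poly_def det_dim_3[OF char_poly_matrix_closed[OF T]]
    using p q by (simp add: char_poly_matrix_def T_def clique_pendant_block_mat_def power2_eq_square algebra_simps)
  moreover have "char_poly D = [:w, 1:] ^ (p - 1) * [:0, 1:] ^ (q - 1)"
  proof -
    have "diag_mat D = replicate (p - 1) (- w) @ replicate (q - 1) 0"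
      using p q by (auto simp: list_eq_iff_nth_eq diag_mat_def D_def m_def nth_append)
    moreover have "upper_triangular D"
      by (auto simp: upper_triangular_def D_def)
    ultimately show ?thesis
      using char_poly_upper_triangular[OF D] by simp
  qed
  ultimately show ?thesis
    by (simp add: ac_simps)
qed

lemma char_poly_clique_pendant_mat:
  fixes p q :: nat and a b w :: "'a :: field_char_0"
  assumes p: "p \<ge> 1" and q: "q \<ge> 1"
  shows "char_poly (clique_pendant_mat p q a b w) =
    [:w, 1:] ^ (p - 1) * [:0, 1:] ^ (q - 1) *
    ([:0, 1:] ^ 2 * ([:0, 1:] - [:of_nat (p - 1) * w:]) - [:of_nat p * a ^ 2:] * [:0, 1:]
      - [:of_nat q * b ^ 2:] * ([:0, 1:] - [:of_nat (p - 1) * w:]))"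
proof -
  have "similar_mat (clique_pendant_mat p q a b w) (clique_pendant_block_mat p q a b w)"
    by (rule similar_mat_intertwining[OF clique_pendant_mat_carrier clique_pendant_block_mat_carrier
          clique_pendant_basis_carrier clique_pendant_basis_inv_carrier
          clique_pendant_basis_inv_mult[OF p q] clique_pendant_mat_mult_basis[OF p q]])
  then show ?thesis
    by (simp only: char_poly_similar char_poly_clique_pendant_block_mat[OF p q])
qed

lemma dihedral_group_mult [simp]:
  "(i, s) \<otimes>\<^bsub>dihedral_group n\<^esub> (j, t) = ((if s then i + (n - j) else i + j) mod n, s \<noteq> t)"
  by (simp add: dihedral_group_def)

lemma carrier_dihedral_group: "carrier (dihedral_group n) = {0..<n} \<times> UNIV"
  by (simp add: dihedral_group_def)

lemma one_dihedral_group [simp]: "\<one>\<^bsub>dihedral_group n\<^esub> = (0, False)"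
  by (simp add: dihedral_group_def)

lemma int_fst_dihedral_group_mult:
  assumes "j < n"
  shows "int (fst (x \<otimes>\<^bsub>dihedral_group n\<^esub> (j, t))) =
    (int (fst x) + (if snd x then - 1 else 1) * int j) mod int n"
proof (cases x)
  case (Pair i s)
  show ?thesis
  proof (cases s)
    case True
    have "int ((i + (n - j)) mod n) = (int i - int j + int n) mod int n"
      using assms by (simp add: of_nat_mod algebra_simps)
    then show ?thesis
      using Pair True by simp
  qed (simp add: Pair of_nat_mod)
qed

lemma dihedral_group_mult_assoc:
  assumes "x \<in> carrier (dihedral_group n)" "y \<in> carrier (dihedral_group n)" "z \<in> carrier (dihedral_group n)"
  shows "(x \<otimes>\<^bsub>dihedral_group n\<^esub> y) \<otimes>\<^bsub>dihedral_group n\<^esub> z =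
    x \<otimes>\<^bsub>dihedral_group n\<^esub> (y \<otimes>\<^bsub>dihedral_group n\<^esub> z)"
proof -
  let ?G = "dihedral_group n" and ?\<sigma> = "\<lambda>s. if s then - 1 else 1 :: int"
  obtain i s j t k u where xyz: "x = (i, s)" "y = (j, t)" "z = (k, u)" and "j < n" "k < n"
    using assms by (auto simp: carrier_dihedral_group)
  have "int (fst ((x \<otimes>\<^bsub>?G\<^esub> y) \<otimes>\<^bsub>?G\<^esub> z)) = (int i + ?\<sigma> s * int j + ?\<sigma> (s \<noteq> t) * int k) mod int n"
    using int_fst_dihedral_group_mult[of k n "x \<otimes>\<^bsub>?G\<^esub> y" u] int_fst_dihedral_group_mult[of j n x t]
      \<open>j < n\<close> \<open>k < n\<close> by (simp add: xyz mod_add_left_eq)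
  also have "\<dots> = (int i + ?\<sigma> s * (int j + ?\<sigma> t * int k)) mod int n"
    by (simp add: algebra_simps)
  also have "\<dots> = (int i + ?\<sigma> s * ((int j + ?\<sigma> t * int k) mod int n)) mod int n"
    by (metis mod_add_right_eq mod_mult_right_eq)
  also have "\<dots> = int (fst (x \<otimes>\<^bsub>?G\<^esub> (y \<otimes>\<^bsub>?G\<^esub> z)))"
    using int_fst_dihedral_group_mult[of "fst (y \<otimes>\<^bsub>?G\<^esub> z)" n x "snd (y \<otimes>\<^bsub>?G\<^esub> z)"]
      int_fst_dihedral_group_mult[of k n y u] \<open>k < n\<close> by (simp add: xyz)
  finally have "fst ((x \<otimes>\<^bsub>?G\<^esub> y) \<otimes>\<^bsub>?G\<^esub> z) = fst (x \<otimes>\<^bsub>?G\<^esub> (y \<otimes>\<^bsub>?G\<^esub> z))"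
    by simp
  then show ?thesis
    by (auto simp: xyz prod_eq_iff)
qed

lemma group_dihedral_group:
  assumes n: "n > 0"
  shows "group (dihedral_group n)"
proof (rule groupI)
  fix x y z
  assume "x \<in> carrier (dihedral_group n)" "y \<in> carrier (dihedral_group n)" "z \<in> carrier (dihedral_group n)"
  then show "(x \<otimes>\<^bsub>dihedral_group n\<^esub> y) \<otimes>\<^bsub>dihedral_group n\<^esub> z =
      x \<otimes>\<^bsub>dihedral_group n\<^esub> (y \<otimes>\<^bsub>dihedral_group n\<^esub> z)"
    by (rule dihedral_group_mult_assoc)
next
  fix x assume "x \<in> carrier (dihedral_group n)"
  then obtain i s where x: "x = (i, s)" "i < n"
    by (auto simp: carrier_dihedral_group)
  show "\<exists>y \<in> carrier (dihedral_group n). y \<otimes>\<^bsub>dihedral_group n\<^esub> x = \<one>\<^bsub>dihedral_group n\<^esub>"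
  proof (cases s)
    case True
    then show ?thesis
      using x by (intro bexI[of _ x]) (auto simp: carrier_dihedral_group)
  next
    case False
    have "((n - i) mod n + i) mod n = 0"
      using x by (cases "i = 0") auto
    then show ?thesis
      using x n False by (intro bexI[of _ "((n - i) mod n, False)"]) (auto simp: carrier_dihedral_group)
  qed
qed (use n in \<open>auto simp: carrier_dihedral_group\<close>)

lemma dihedral_group_rotation_pow:
  "(i, False) [^]\<^bsub>dihedral_group n\<^esub> (k :: nat) = ((i * k) mod n, False)"
proof (induction k)
  case (Suc k)
  have "((i * k) mod n + i) mod n = (i * Suc k) mod n"
    by (metis mod_add_left_eq mult_Suc_right add.commute)
  then show ?case
    by (simp add: Suc.IH)
qed simp

lemma dihedral_group_reflection_pow:
  assumes "i < n"
  shows "(i, True) [^]\<^bsub>dihedral_group n\<^esub> (k :: nat) = (if even k then (0, False) else (i, True))"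
  by (induction k) (use assms in auto)

lemma generate_dihedral_group_singleton:
  assumes "n > 0" and "z \<in> carrier (dihedral_group n)"
  shows "generate (dihedral_group n) {z} = range (\<lambda>k :: nat. z [^]\<^bsub>dihedral_group n\<^esub> k)"
proof -
  interpret group "dihedral_group n"
    using group_dihedral_group[OF assms(1)] .
  show ?thesis
    using generate_pow_on_finite_carrier[OF _ assms(2)] by (auto simp: carrier_dihedral_group)
qed

lemma generate_dihedral_group_reflection:
  assumes "i < n"
  shows "generate (dihedral_group n) {(i, True)} \<subseteq> {(0, False), (i, True)}"
  using assms by (auto simp: generate_dihedral_group_singleton carrier_dihedral_group dihedral_group_reflection_pow)

lemma generate_dihedral_group_rotation:
  assumes "i < n"
  shows "generate (dihedral_group n) {(i, False)} \<subseteq> {0..<n} \<times> {False}"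
  using assms by (auto simp: generate_dihedral_group_singleton carrier_dihedral_group dihedral_group_rotation_pow)

lemma rotation_mem_generate_dihedral_group:
  assumes "k < n"
  shows "(k, False) \<in> generate (dihedral_group n) {(1 mod n, False)}"
proof -
  have "(k, False) = (1 mod n, False) [^]\<^bsub>dihedral_group n\<^esub> k"
    using assms by (simp add: dihedral_group_rotation_pow mod_mult_left_eq)
  then show ?thesis
    using assms by (simp add: generate_dihedral_group_singleton carrier_dihedral_group)
qed

lemma enhanced_power_adj_dihedral_group_iff:
  assumes n: "n > 0"
  shows "enhanced_power_adj (dihedral_group n) x y \<longleftrightarrow>
    x \<in> carrier (dihedral_group n) \<and> y \<in> carrier (dihedral_group n) \<and> x \<noteq> y \<and>
    (x = (0, False) \<or> y = (0, False) \<or> \<not> snd x \<and> \<not> snd y)"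
    (is "_ \<longleftrightarrow> ?x \<and> ?y \<and> x \<noteq> y \<and> ?shape")
proof
  let ?G = "dihedral_group n"
  assume "enhanced_power_adj ?G x y"
  then obtain z where adj: "?x" "?y" "x \<noteq> y" and z: "z \<in> carrier ?G"
    and xy: "x \<in> generate ?G {z}" "y \<in> generate ?G {z}"
    by (auto simp: enhanced_power_adj_def)
  obtain i s where z_eq: "z = (i, s)" and "i < n"
    using z by (cases z) (auto simp: carrier_dihedral_group)
  have ?shape
  proof (cases s)
    case True
    then show ?thesis
      using xy generate_dihedral_group_reflection[OF \<open>i < n\<close>] \<open>x \<noteq> y\<close> by (auto simp: z_eq)
  next
    case False
    then show ?thesis
      using xy generate_dihedral_group_rotation[OF \<open>i < n\<close>] by (auto simp: z_eq)
  qed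
  then show "?x \<and> ?y \<and> x \<noteq> y \<and> ?shape"
    using adj by blast
next
  let ?G = "dihedral_group n"
  assume adj: "?x \<and> ?y \<and> x \<noteq> y \<and> ?shape"
  have one_mem: "(0, False) \<in> generate ?G H" for H
    using generate.one[of ?G H] by simp
  consider "x = (0, False)" | "y = (0, False)" | "\<not> snd x" "\<not> snd y"
    using adj by blast
  then have "\<exists>z \<in> carrier ?G. x \<in> generate ?G {z} \<and> y \<in> generate ?G {z}"
  proof cases
    case 1
    then show ?thesis
      using adj one_mem by (intro bexI[of _ y]) (auto intro: generate.incl)
  next
    case 2
    then show ?thesis
      using adj one_mem by (intro bexI[of _ x]) (auto intro: generate.incl)
  next
    case 3
    then have "x = (fst x, False)" "y = (fst y, False)" "fst x < n" "fst y < n"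
      using adj by (auto simp: carrier_dihedral_group prod_eq_iff)
    then have "x \<in> generate ?G {(1 mod n, False)}" "y \<in> generate ?G {(1 mod n, False)}"
      by (metis rotation_mem_generate_dihedral_group)+
    then show ?thesis
      using n by (intro bexI[of _ "(1 mod n, False)"]) (auto simp: carrier_dihedral_group)
  qed
  then show "enhanced_power_adj ?G x y"
    using adj by (simp add: enhanced_power_adj_def)
qed

lemma graph_deg_dihedral_identity:
  assumes "n > 0"
  shows "graph_deg (carrier (dihedral_group n)) (enhanced_power_adj (dihedral_group n)) (0, False) = 2 * n - 1"
proof -
  have "{v \<in> carrier (dihedral_group n). enhanced_power_adj (dihedral_group n) (0, False) v} =
      carrier (dihedral_group n) - {(0, False)}"
    using assms by (auto simp: enhanced_power_adj_dihedral_group_iff carrier_dihedral_group)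
  moreover have "card (carrier (dihedral_group n)) = 2 * n"
    by (simp add: carrier_dihedral_group card_cartesian_product)
  ultimately show ?thesis
    using assms by (simp add: graph_deg_def card_Diff_singleton carrier_dihedral_group)
qed

lemma graph_deg_dihedral_rotation:
  assumes "0 < k" "k < n"
  shows "graph_deg (carrier (dihedral_group n)) (enhanced_power_adj (dihedral_group n)) (k, False) = n - 1"
proof -
  have "{v \<in> carrier (dihedral_group n). enhanced_power_adj (dihedral_group n) (k, False) v} =
      ({0..<n} - {k}) \<times> {False}"
    using assms by (auto simp: enhanced_power_adj_dihedral_group_iff carrier_dihedral_group)
  then show ?thesis
    using assms by (simp add: graph_deg_def card_cartesian_product)
qed

lemma graph_deg_dihedral_reflection:
  assumes "k < n"
  shows "graph_deg (carrier (dihedral_group n)) (enhanced_power_adj (dihedral_group n)) (k, True) = 1"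
proof -
  have "{v \<in> carrier (dihedral_group n). enhanced_power_adj (dihedral_group n) (k, True) v} = {(0, False)}"
    using assms by (auto simp: enhanced_power_adj_dihedral_group_iff carrier_dihedral_group)
  then show ?thesis
    by (simp add: graph_deg_def)
qed

(* Enumerates D_2n in the layout of clique_pendant_mat (n - 1) n: e, a, b, a^2, ..., a^(n-1), a b, ..., a^(n-1) b. *)
definition dihedral_vertex :: "nat \<Rightarrow> nat \<Rightarrow> nat \<times> bool" where
  "dihedral_vertex n i =
     (if i = 0 then (0, False) else if i = 1 then (1, False) else if i = 2 then (0, True)
      else if i \<le> n then (i - 1, False) else (i - n, True))"

lemma bij_betw_dihedral_vertex:
  assumes "n \<ge> 2"
  shows "bij_betw (dihedral_vertex n) {0..<2 * n} (carrier (dihedral_group n))"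
proof (rule bij_betw_imageI)
  show "inj_on (dihedral_vertex n) {0..<2 * n}"
    using assms by (intro inj_onI) (auto simp: dihedral_vertex_def split: if_splits)
  have "x \<in> dihedral_vertex n ` {0..<2 * n}" if x_in: "x \<in> carrier (dihedral_group n)" for x
  proof -
    obtain i s where x: "x = (i, s)" "i < n"
      using x_in by (auto simp: carrier_dihedral_group)
    consider "s" "i = 0" | "s" "i > 0" | "\<not> s" "i \<le> 1" | "\<not> s" "i > 1"
      by fastforce
    then show ?thesis
    proof cases
      case 1
      then show ?thesis using x assms by (intro image_eqI[of _ _ 2]) (auto simp: dihedral_vertex_def)
    next
      case 2
      then show ?thesis using x assms by (intro image_eqI[of _ _ "i + n"]) (auto simp: dihedral_vertex_def)
    next
      case 3
      then show ?thesis using x assms by (intro image_eqI[of _ _ i]) (auto simp: dihedral_vertex_def)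
    next
      case 4
      then show ?thesis using x assms by (intro image_eqI[of _ _ "i + 1"]) (auto simp: dihedral_vertex_def)
    qed
  qed
  then show "dihedral_vertex n ` {0..<2 * n} = carrier (dihedral_group n)"
    using assms by (auto simp: dihedral_vertex_def carrier_dihedral_group)
qed

lemma graph_deg_dihedral_vertex:
  assumes "n \<ge> 2" "i < 2 * n"
  shows "graph_deg (carrier (dihedral_group n)) (enhanced_power_adj (dihedral_group n)) (dihedral_vertex n i) =
    (if i = 0 then 2 * n - 1 else if clique_index (n - 1) i then n - 1 else 1)"
  using assms graph_deg_dihedral_identity graph_deg_dihedral_rotation graph_deg_dihedral_reflection
  by (auto simp: dihedral_vertex_def clique_index_def)

lemma sombor_matrix_dihedral_vertex:
  assumes n: "n \<ge> 2"
  shows "sombor_matrix (map (dihedral_vertex n) [0..<2 * n]) (enhanced_power_adj (dihedral_group n)) =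
    clique_pendant_mat (n - 1) n
      (sqrt (real (2 * n - 1) ^ 2 + real (n - 1) ^ 2)) (sqrt (real (2 * n - 1) ^ 2 + 1))
      (sqrt (real (n - 1) ^ 2 + real (n - 1) ^ 2))"
proof -
  let ?v = "dihedral_vertex n" and ?E = "enhanced_power_adj (dihedral_group n)"
  have bij: "bij_betw ?v {0..<2 * n} (carrier (dihedral_group n))"
    using bij_betw_dihedral_vertex[OF n] .
  have set_eq: "set (map ?v [0..<2 * n]) = carrier (dihedral_group n)"
    using bij by (simp add: bij_betw_def)
  have dim: "n - 1 + n + 1 = 2 * n"
    using n by simp
  have adj: "?E (?v i) (?v j) \<longleftrightarrow>
      i \<noteq> j \<and> (i = 0 \<or> j = 0 \<or> clique_index (n - 1) i \<and> clique_index (n - 1) j)"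
    if "i < 2 * n" "j < 2 * n" for i j
  proof -
    have "?v i = ?v j \<longleftrightarrow> i = j"
      using bij that by (auto simp: bij_betw_def inj_on_eq_iff)
    moreover have "?v i \<in> carrier (dihedral_group n)" "?v j \<in> carrier (dihedral_group n)"
      using bij that by (auto simp: bij_betw_def)
    ultimately show ?thesis
      using n that by (auto simp: enhanced_power_adj_dihedral_group_iff dihedral_vertex_def clique_index_def)
  qed
  show ?thesis
    unfolding sombor_matrix_def set_eq
    using n by (intro eq_matI) (auto simp: clique_pendant_mat_def dim adj graph_deg_dihedral_vertex)
qed

theorem corollary5p1:
  fixes n :: nat and vs :: "(nat \<times> bool) list"
  assumes "n \<ge> 3"
    and "distinct vs" and "set vs = carrier (dihedral_group n)"
  shows "char_poly (sombor_matrix vs (enhanced_power_adj (dihedral_group n))) =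
    [: real (n - 1) * sqrt 2, 1 :] ^ (n - 2) * [:0, 1:] ^ (n - 1) *
    (let X = [:0, 1:] :: real poly; c = real (n - 1) * real (n - 2) * sqrt 2 in
       X ^ 2 * (X - [:c:])
       - [:real (n - 1) * (5 * real n ^ 2 - 6 * real n + 2):] * X
       - [:2 * real n * (2 * real n ^ 2 - 2 * real n + 1):] * (X - [:c:]))"
proof -
  let ?E = "enhanced_power_adj (dihedral_group n)" and ?ws = "map (dihedral_vertex n) [0..<2 * n]"
  define a where "a = sqrt (real (2 * n - 1) ^ 2 + real (n - 1) ^ 2)"
  define b where "b = sqrt (real (2 * n - 1) ^ 2 + 1)"
  define w where "w = sqrt (real (n - 1) ^ 2 + real (n - 1) ^ 2)"
  have bij: "bij_betw (dihedral_vertex n) {0..<2 * n} (carrier (dihedral_group n))"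
    using assms(1) by (intro bij_betw_dihedral_vertex) simp
  have "char_poly (sombor_matrix vs ?E) = char_poly (sombor_matrix ?ws ?E)"
    using assms(2,3) bij
    by (intro char_poly_sombor_matrix_enumeration_invariant) (auto simp: distinct_map bij_betw_def)
  also have "\<dots> = char_poly (clique_pendant_mat (n - 1) n a b w)"
    using assms(1) by (simp add: sombor_matrix_dihedral_vertex a_def b_def w_def)
  also have "\<dots> = [:w, 1:] ^ (n - 2) * [:0, 1:] ^ (n - 1) *
      ([:0, 1:] ^ 2 * ([:0, 1:] - [:real (n - 2) * w:]) - [:real (n - 1) * a ^ 2:] * [:0, 1:]
        - [:real n * b ^ 2:] * ([:0, 1:] - [:real (n - 2) * w:]))"
    using char_poly_clique_pendant_mat[of "n - 1" n a b w] assms(1) by (simp only: diff_diff_left one_add_one)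
  also have "w = real (n - 1) * sqrt 2"
    by (simp add: w_def real_sqrt_mult power_mult_distrib flip: mult_2)
  also have "real (n - 2) * (real (n - 1) * sqrt 2) = real (n - 1) * real (n - 2) * sqrt 2"
    by simp
  also have "a ^ 2 = real (2 * n - 1) ^ 2 + real (n - 1) ^ 2"
    by (simp add: a_def)
  also have "\<dots> = 5 * real n ^ 2 - 6 * real n + 2"
    using assms(1) by (simp add: of_nat_diff power2_eq_square algebra_simps)
  also have "b ^ 2 = real (2 * n - 1) ^ 2 + 1"
    by (simp add: b_def)
  also have "real n * \<dots> = 2 * real n * (2 * real n ^ 2 - 2 * real n + 1)"
    using assms(1) by (simp add: of_nat_diff power2_eq_square algebra_simps)
  finally show ?thesis
    by (simp add: Let_def mult.assoc)
qed

end
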